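(* Let $R$ be a Noetherian commutative ring and $I_1,I_2,I_3\subset R$ ideals; put $J=I_1+I_2+I_3$. Let $k_1,\dots,k_n$ generate $I_3$, let $A=R[x_1,\dots,x_n]$, and let $\pi_1:A\to R/I_1$, $\pi_2:A\to R/I_2$ be the $R$-algebra homomorphisms with $\pi_1(x_j)=k_j$ and $\pi_2(x_j)=0$ for all $j$. Then the pullback (fiber product) in commutative rings of the diagram $R/I_1\to R/J\leftarrow R/I_2$ (natural projections) is isomorphic to $A/(\ker\pi_1\cap\ker\pi_2)$. In particular this pullback is a finitely generated $R$-algebra. *)

theory Defs
  imports "HOL-Algebra.Algebra" "HOL-Library.Poly_Mapping"
begin

definition type_ring :: "('b::comm_ring_1) ring" where
  "type_ring = \<lparr>partial_object.carrier = UNIV, monoid.mult = (*), monoid.one = 1, ring.zero = 0, ring.add = (+)\<rparr>"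

text \<open>Polynomial ring R[x_j : j in 'n] over a type-ring, realised as finitely supported
  maps from monomials (exponent vectors 'n =>0 nat) to coefficients.\<close>
type_synonym ('n, 'b) mpoly = "('n \<Rightarrow>\<^sub>0 nat) \<Rightarrow>\<^sub>0 'b"

definition mpoly_const :: "'b::comm_ring_1 \<Rightarrow> ('n, 'b) mpoly" where
  "mpoly_const c = Poly_Mapping.single 0 c"

definition mpoly_var :: "'n \<Rightarrow> ('n, 'b::comm_ring_1) mpoly" where
  "mpoly_var j = Poly_Mapping.single (Poly_Mapping.single j 1) 1"

text \<open>Natural projection R/I -> R/J (for I a subset of J): a coset X of I is sent to the
  coset of J of any representative of X.\<close>
definition quot_proj :: "('a, 'm) ring_scheme \<Rightarrow> 'a set \<Rightarrow> 'a set \<Rightarrow> 'a set" where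
  "quot_proj S K Y = a_r_coset S K (SOME a. a \<in> Y)"

definition fiber_product ::
  "('a, 'm) ring_scheme \<Rightarrow> ('b, 'n) ring_scheme \<Rightarrow> ('a \<Rightarrow> 'c) \<Rightarrow> ('b \<Rightarrow> 'c) \<Rightarrow> ('a \<times> 'b) ring" where
  "fiber_product A B f g =
     (RDirProd A B)\<lparr>carrier := {(a, b). a \<in> carrier A \<and> b \<in> carrier B \<and> f a = g b}\<rparr>"

definition fg_algebra :: "('a, 'm) ring_scheme \<Rightarrow> ('b, 'n) ring_scheme \<Rightarrow> ('a \<Rightarrow> 'b) \<Rightarrow> bool" where
  "fg_algebra R S phi \<longleftrightarrow>
     (\<exists>F. finite F \<and> F \<subseteq> carrier S \<and> generate_ring S (phi ` carrier R \<union> F) = carrier S)"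

end

theory Submission
  imports Defs
begin

text \<open>The map \<open>\<psi> = (\<pi>1, \<pi>2)\<close> from \<open>A\<close> to \<open>R/I1 \<times> R/I2\<close> has kernel
  \<open>ker \<pi>1 \<inter> ker \<pi>2\<close>, so by the first isomorphism theorem it suffices to show that its image is
  exactly the pullback. The two composites \<open>A \<rightarrow> R/J\<close> agree on the constants and, since
  \<open>k\<^sub>j \<in> J\<close>, on the variables; hence they agree everywhere and the image lies in the
  pullback. Conversely, if \<open>a - b \<in> J\<close>, write \<open>a - b = i\<^sub>1 + i\<^sub>2 + \<Sum> r\<^sub>j k\<^sub>j\<close>;
  then \<open>b + i\<^sub>2 + \<Sum> r\<^sub>j x\<^sub>j\<close> is mapped to \<open>(a + I1, b + I2)\<close>. Being a homomorphic image
  of \<open>A\<close>, which is generated by the constants and finitely many variables, the pullback is a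
  finitely generated \<open>R\<close>-algebra.\<close>

section \<open>Generated subrings, finite generation and fiber products\<close>

lemma (in ring) ideals_subset_set_add:
  assumes "ideal I R" "ideal K R"
  shows "I \<subseteq> I <+> K" and "K \<subseteq> I <+> K"
  using genideal_self[of "I \<union> K"] union_genideal[OF assms] ideal.Icarr[OF assms(1)] ideal.Icarr[OF assms(2)]
  by blast+

lemma ring_hom_eq_on_generate_ring:
  assumes "ring A" "ring B" "h1 \<in> ring_hom A B" "h2 \<in> ring_hom A B"
    and "H \<subseteq> carrier A" "\<And>x. x \<in> H \<Longrightarrow> h1 x = h2 x"
    and "x \<in> generate_ring A H"
  shows "h1 x = h2 x"
proof -
  interpret h1: ring_hom_ring A B h1 by (rule ring_hom_ringI2) fact+
  interpret h2: ring_hom_ring A B h2 by (rule ring_hom_ringI2) fact+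
  from assms(7) have "x \<in> carrier A \<and> h1 x = h2 x"
    by (induction rule: generate_ring.induct) (use assms(5,6) in auto)
  then show ?thesis ..
qed

lemma ring_hom_image_generate_ring:
  assumes "ring A" "ring B" "h \<in> ring_hom A B" "H \<subseteq> carrier A"
    and "x \<in> generate_ring A H"
  shows "h x \<in> generate_ring B (h ` H)"
proof -
  interpret h: ring_hom_ring A B h by (rule ring_hom_ringI2) fact+
  from assms(5) have "x \<in> carrier A \<and> h x \<in> generate_ring B (h ` H)"
    by (induction rule: generate_ring.induct) (use assms(4) in \<open>auto intro: generate_ring.intros\<close>)
  then show ?thesis ..
qed

lemma fg_algebra_surjective_image:
  assumes "ring A" "ring S" "fg_algebra R A \<phi>" "h \<in> ring_hom A S" "h ` carrier A = carrier S"
  shows "fg_algebra R S (h \<circ> \<phi>)"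
proof -
  obtain F where F: "finite F" "F \<subseteq> carrier A" "generate_ring A (\<phi> ` carrier R \<union> F) = carrier A"
    using assms(3) unfolding fg_algebra_def by blast
  let ?G = "\<phi> ` carrier R \<union> F"
  have G: "?G \<subseteq> carrier A"
    using generate_ring.incl[of _ ?G A] F(3) by blast
  then have hG: "h ` ?G \<subseteq> carrier S"
    using assms(5) by (metis image_mono)
  have "generate_ring S (h ` ?G) = carrier S"
  proof
    show "generate_ring S (h ` ?G) \<subseteq> carrier S"
      by (rule ring.generate_ring_incl[OF assms(2) hG])
    show "carrier S \<subseteq> generate_ring S (h ` ?G)"
      unfolding assms(5)[symmetric] F(3)[symmetric]
      using ring_hom_image_generate_ring[OF assms(1,2,4) G] by blast
  qed
  moreover have "h ` ?G = (h \<circ> \<phi>) ` carrier R \<union> h ` F"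
    by (simp add: image_Un image_comp)
  ultimately show ?thesis
    unfolding fg_algebra_def using F(1) hG by (intro exI[of _ "h ` F"]) auto
qed

lemma fiber_product_pair_ring_hom:
  assumes "ring A" "ring B1" "ring B2" "h1 \<in> ring_hom A B1" "h2 \<in> ring_hom A B2"
    and onto: "(\<lambda>x. (h1 x, h2 x)) ` carrier A = carrier (fiber_product B1 B2 f g)"
  shows "ring (fiber_product B1 B2 f g)"
    and "(\<lambda>x. (h1 x, h2 x)) \<in> ring_hom A (fiber_product B1 B2 f g)"
proof -
  let ?\<psi> = "\<lambda>x. (h1 x, h2 x)"
  have "?\<psi> \<in> ring_hom A (RDirProd B1 B2)"
    using ring_hom_trans[OF RDirProd_hom1 RDirProd_hom3[OF assms(4,5)]] by (simp add: comp_def)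
  then interpret \<psi>: ring_hom_ring A "RDirProd B1 B2" ?\<psi>
    by (intro ring_hom_ringI2 RDirProd_ring assms(1-3))
  have FP: "fiber_product B1 B2 f g = (RDirProd B1 B2)\<lparr>carrier := ?\<psi> ` carrier A\<rparr>"
    unfolding onto by (simp add: fiber_product_def)
  show "ring (fiber_product B1 B2 f g)"
    unfolding FP by (rule \<psi>.S.subring_is_ring[OF \<psi>.img_is_subring[OF \<psi>.R.carrier_is_subring]])
  show "?\<psi> \<in> ring_hom A (fiber_product B1 B2 f g)"
    using \<psi>.homh unfolding FP ring_hom_def by simp
qed

lemma fiber_product_iso_Quot_kernels:
  assumes "ring A" "ring B1" "ring B2" "h1 \<in> ring_hom A B1" "h2 \<in> ring_hom A B2"
    and onto: "(\<lambda>x. (h1 x, h2 x)) ` carrier A = carrier (fiber_product B1 B2 f g)"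
  shows "fiber_product B1 B2 f g \<simeq> A Quot (a_kernel A B1 h1 \<inter> a_kernel A B2 h2)"
proof -
  let ?\<psi> = "\<lambda>x. (h1 x, h2 x)"
  interpret \<psi>: ring_hom_ring A "fiber_product B1 B2 f g" ?\<psi>
    using fiber_product_pair_ring_hom[OF assms] assms(1) by (intro ring_hom_ringI2)
  have "\<zero>\<^bsub>RDirProd B1 B2\<^esub> = (\<zero>\<^bsub>B1\<^esub>, \<zero>\<^bsub>B2\<^esub>)"
    by (simp add: RDirProd_def DirProd_def monoid.defs)
  then have "\<zero>\<^bsub>fiber_product B1 B2 f g\<^esub> = (\<zero>\<^bsub>B1\<^esub>, \<zero>\<^bsub>B2\<^esub>)"
    by (simp add: fiber_product_def)
  then have "a_kernel A (fiber_product B1 B2 f g) ?\<psi> = a_kernel A B1 h1 \<inter> a_kernel A B2 h2"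
    unfolding a_kernel_def' by (simp add: set_eq_iff) blast
  moreover have "ring (A Quot a_kernel A (fiber_product B1 B2 f g) ?\<psi>)"
    by (rule ideal.quotient_is_ring[OF \<psi>.kernel_is_ideal])
  ultimately show ?thesis
    using ring_iso_sym[OF _ \<psi>.FactRing_iso[OF onto]] by simp
qed

section \<open>Rings of a type class viewed as HOL-Algebra rings\<close>

lemma type_ring_simps [simp]:
  "carrier (type_ring :: 'b::comm_ring_1 ring) = UNIV"
  "monoid.mult (type_ring :: 'b::comm_ring_1 ring) = (*)"
  "monoid.one (type_ring :: 'b::comm_ring_1 ring) = 1"
  "ring.zero (type_ring :: 'b::comm_ring_1 ring) = 0"
  "ring.add (type_ring :: 'b::comm_ring_1 ring) = (+)"
  by (simp_all add: type_ring_def)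

lemma cring_type_ring: "cring (type_ring :: 'b::comm_ring_1 ring)"
proof (rule cringI)
  show "abelian_group (type_ring :: 'b ring)"
    by (rule abelian_groupI) (simp_all add: add.assoc, metis add.commute ab_left_minus)
  show "Group.comm_monoid (type_ring :: 'b ring)"
    by (rule comm_monoidI) (simp_all add: mult.assoc mult.commute)
qed (simp add: distrib_right)

lemma ring_type_ring: "ring (type_ring :: 'b::comm_ring_1 ring)"
  by (rule cring.axioms(1)[OF cring_type_ring])

lemma type_ring_a_inv [simp]: "\<ominus>\<^bsub>type_ring\<^esub> x = - (x :: 'b::comm_ring_1)"
proof -
  interpret cring "type_ring :: 'b ring" by (rule cring_type_ring)
  show ?thesis by (rule minus_equality) simp_all
qed

lemma type_ring_set_add_iff:
  "x \<in> I <+>\<^bsub>type_ring\<^esub> K \<longleftrightarrow> (\<exists>a\<in>I. \<exists>b\<in>K. x = a + (b :: 'b::comm_ring_1))"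
  by (auto simp: set_add_def set_mult_def)

lemma type_ring_rcos_eq_iff:
  assumes "ideal I (type_ring :: 'b::comm_ring_1 ring)"
  shows "I +>\<^bsub>type_ring\<^esub> a = I +>\<^bsub>type_ring\<^esub> b \<longleftrightarrow> a - b \<in> I"
  using ring.quotient_eq_iff_same_a_r_cos[OF ring_type_ring assms, of a b]
  by (simp add: a_minus_def)

lemma type_ring_Quot_carrier:
  "carrier (type_ring Quot I) = range (\<lambda>a. I +>\<^bsub>type_ring\<^esub> (a :: 'b::comm_ring_1))"
  by (auto simp: FactRing_def A_RCOSETS_def RCOSETS_def a_r_coset_def)

lemma type_ring_Quot_rcos_ops:
  assumes "ideal I (type_ring :: 'b::comm_ring_1 ring)"
  shows "(I +>\<^bsub>type_ring\<^esub> a) \<oplus>\<^bsub>type_ring Quot I\<^esub> (I +>\<^bsub>type_ring\<^esub> b) = I +>\<^bsub>type_ring\<^esub> (a + b)"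
    and "(I +>\<^bsub>type_ring\<^esub> a) \<otimes>\<^bsub>type_ring Quot I\<^esub> (I +>\<^bsub>type_ring\<^esub> b) = I +>\<^bsub>type_ring\<^esub> (a * b)"
    and "\<one>\<^bsub>type_ring Quot I\<^esub> = I +>\<^bsub>type_ring\<^esub> 1"
proof -
  interpret ideal I "type_ring :: 'b ring" by fact
  show "(I +>\<^bsub>type_ring\<^esub> a) \<oplus>\<^bsub>type_ring Quot I\<^esub> (I +>\<^bsub>type_ring\<^esub> b) = I +>\<^bsub>type_ring\<^esub> (a + b)"
    using ring_hom_add[OF rcos_ring_hom, of a b] by simp
  show "(I +>\<^bsub>type_ring\<^esub> a) \<otimes>\<^bsub>type_ring Quot I\<^esub> (I +>\<^bsub>type_ring\<^esub> b) = I +>\<^bsub>type_ring\<^esub> (a * b)"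
    using ring_hom_mult[OF rcos_ring_hom, of a b] by simp
  show "\<one>\<^bsub>type_ring Quot I\<^esub> = I +>\<^bsub>type_ring\<^esub> 1"
    using ring_hom_one[OF rcos_ring_hom] by simp
qed

lemma ideal_type_ring_linear_combinations:
  fixes k :: "'n::finite \<Rightarrow> 'b::comm_ring_1"
  shows "ideal (range (\<lambda>r. \<Sum>j\<in>UNIV. r j * k j)) type_ring"
proof -
  interpret cring "type_ring :: 'b ring" by (rule cring_type_ring)
  define L where "L = range (\<lambda>r. \<Sum>j\<in>UNIV. r j * k j)"
  have add: "x + y \<in> L" if "x \<in> L" "y \<in> L" for x y
  proof -
    from that obtain r s where "x = (\<Sum>j\<in>UNIV. r j * k j)" "y = (\<Sum>j\<in>UNIV. s j * k j)"
      by (auto simp: L_def)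
    then have "x + y = (\<Sum>j\<in>UNIV. (r j + s j) * k j)"
      by (simp add: sum.distrib distrib_right)
    then show ?thesis by (simp add: L_def)
  qed
  have scale: "c * x \<in> L" if "x \<in> L" for x c
  proof -
    from that obtain r where "x = (\<Sum>j\<in>UNIV. r j * k j)" by (auto simp: L_def)
    then have "c * x = (\<Sum>j\<in>UNIV. (c * r j) * k j)"
      by (simp add: sum_distrib_left mult.assoc)
    then show ?thesis by (simp add: L_def)
  qed
  have "ideal L type_ring"
  proof (rule idealI)
    show "subgroup L (add_monoid type_ring)"
    proof (rule group.subgroupI[OF a_group])
      show "L \<noteq> {}" by (simp add: L_def)
      show "inv\<^bsub>add_monoid type_ring\<^esub> a \<in> L" if "a \<in> L" for a
        using scale[OF that, of "-1"] type_ring_a_inv[of a] unfolding a_inv_def by simp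
    qed (simp_all add: add)
  qed (simp_all add: ring_axioms, (metis scale mult.commute)+)
  then show ?thesis by (simp add: L_def)
qed

lemma genideal_type_ring_finite_range:
  fixes k :: "'n::finite \<Rightarrow> 'b::comm_ring_1"
  assumes "x \<in> genideal type_ring (range k)"
  obtains r where "x = (\<Sum>j\<in>UNIV. r j * k j)"
proof -
  interpret cring "type_ring :: 'b ring" by (rule cring_type_ring)
  have "k i \<in> range (\<lambda>r. \<Sum>j\<in>UNIV. r j * k j)" for i
  proof -
    have "(\<Sum>j\<in>UNIV. (if j = i then 1 else 0) * k j) = (\<Sum>j\<in>UNIV. if j = i then k j else 0)"
      by (rule sum.cong) auto
    then have "k i = (\<Sum>j\<in>UNIV. (if j = i then 1 else 0) * k j)" by simp
    then show ?thesis by simp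
  qed
  then have "range k \<subseteq> range (\<lambda>r. \<Sum>j\<in>UNIV. r j * k j)" by blast
  then have "genideal type_ring (range k) \<subseteq> range (\<lambda>r. \<Sum>j\<in>UNIV. r j * k j)"
    by (rule genideal_minimal[OF ideal_type_ring_linear_combinations])
  then show ?thesis using assms that by blast
qed

lemma quot_proj_rcos:
  assumes I: "ideal I (type_ring :: 'b::comm_ring_1 ring)" and K: "ideal K (type_ring :: 'b ring)"
    and "I \<subseteq> K"
  shows "quot_proj type_ring K (I +>\<^bsub>type_ring\<^esub> a) = K +>\<^bsub>type_ring\<^esub> a"
proof -
  interpret ideal I "type_ring :: 'b ring" by fact
  define x where "x = (SOME x. x \<in> I +>\<^bsub>type_ring\<^esub> a)"
  have "x \<in> I +>\<^bsub>type_ring\<^esub> a"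
    unfolding x_def by (rule someI[of _ a]) (simp add: a_rcos_self)
  then have "I +>\<^bsub>type_ring\<^esub> x = I +>\<^bsub>type_ring\<^esub> a"
    using a_repr_independence'[of x a] by simp
  then have "x - a \<in> K"
    using type_ring_rcos_eq_iff[OF I] assms(3) by blast
  then show ?thesis
    unfolding quot_proj_def x_def[symmetric] using type_ring_rcos_eq_iff[OF K] by blast
qed

lemma quot_proj_ring_hom:
  assumes I: "ideal I (type_ring :: 'b::comm_ring_1 ring)" and K: "ideal K (type_ring :: 'b ring)"
    and sub: "I \<subseteq> K"
  shows "quot_proj type_ring K \<in> ring_hom (type_ring Quot I) (type_ring Quot K)"
proof (rule ring_hom_memI)
  fix x assume "x \<in> carrier (type_ring Quot I)"
  then show "quot_proj type_ring K x \<in> carrier (type_ring Quot K)"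
    by (auto simp: type_ring_Quot_carrier quot_proj_rcos[OF I K sub])
next
  fix x y assume "x \<in> carrier (type_ring Quot I)" "y \<in> carrier (type_ring Quot I)"
  then obtain a b where "x = I +>\<^bsub>type_ring\<^esub> a" "y = I +>\<^bsub>type_ring\<^esub> b"
    by (auto simp: type_ring_Quot_carrier)
  then show "quot_proj type_ring K (x \<otimes>\<^bsub>type_ring Quot I\<^esub> y) =
      quot_proj type_ring K x \<otimes>\<^bsub>type_ring Quot K\<^esub> quot_proj type_ring K y"
    and "quot_proj type_ring K (x \<oplus>\<^bsub>type_ring Quot I\<^esub> y) =
      quot_proj type_ring K x \<oplus>\<^bsub>type_ring Quot K\<^esub> quot_proj type_ring K y"
    by (simp_all add: type_ring_Quot_rcos_ops[OF I] type_ring_Quot_rcos_ops[OF K]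
        quot_proj_rcos[OF I K sub])
qed (simp add: type_ring_Quot_rcos_ops[OF I] type_ring_Quot_rcos_ops[OF K] quot_proj_rcos[OF I K sub])

section \<open>Polynomials\<close>

lemma update_eq_add_single:
  assumes "a \<notin> Poly_Mapping.keys f"
  shows "Poly_Mapping.update a b f = f + Poly_Mapping.single a b"
  using assms
  by (intro poly_mapping_eqI)
    (auto simp: lookup_update lookup_add lookup_single when_def not_in_keys_iff_lookup_eq_zero)

lemma monomial_in_generate_ring_const_var:
  "Poly_Mapping.single \<alpha> (1::'b::comm_ring_1)
    \<in> generate_ring (type_ring :: ('n, 'b) mpoly ring) (range mpoly_const \<union> range mpoly_var)"
proof -
  let ?G = "generate_ring (type_ring :: ('n, 'b) mpoly ring) (range mpoly_const \<union> range mpoly_var)"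
  have one: "1 \<in> ?G"
    using generate_ring.one[of "type_ring :: ('n, 'b) mpoly ring"] by simp
  have mult: "p * q \<in> ?G" if "p \<in> ?G" "q \<in> ?G" for p q
    using generate_ring.eng_mult[OF that] by simp
  have var_mem: "mpoly_var j \<in> ?G" for j
    by (auto intro: generate_ring.incl)
  have var_power: "Poly_Mapping.single (Poly_Mapping.single j n) (1::'b) \<in> ?G" for j n
  proof (induction n)
    case 0
    show ?case using one by simp
  next
    case (Suc n)
    have "Poly_Mapping.single (Poly_Mapping.single j (Suc n)) (1::'b)
        = Poly_Mapping.single (Poly_Mapping.single j n) 1 * mpoly_var j"
      by (simp add: mpoly_var_def mult_single single_add[symmetric])
    then show ?case using mult[OF Suc var_mem] by simp
  qed
  show ?thesis
  proof (induction \<alpha> rule: update_induct)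
    case const
    show ?case using one by simp
  next
    case (update \<alpha> j n)
    then show ?case
      using mult[OF update(3) var_power[of j n]] by (simp add: update_eq_add_single mult_single)
  qed
qed

lemma generate_ring_mpoly_const_var:
  "generate_ring (type_ring :: ('n, 'b::comm_ring_1) mpoly ring) (range mpoly_const \<union> range mpoly_var) = UNIV"
proof -
  let ?G = "generate_ring (type_ring :: ('n, 'b) mpoly ring) (range mpoly_const \<union> range mpoly_var)"
  have const_mem: "mpoly_const c \<in> ?G" for c
    by (auto intro: generate_ring.incl)
  have "p \<in> ?G" for p :: "('n, 'b) mpoly"
  proof (induction p rule: update_induct)
    case const
    have "(0 :: ('n, 'b) mpoly) = mpoly_const 0" by (simp add: mpoly_const_def)
    then show ?case using const_mem[of 0] by (simp only:)
  next
    case (update p \<alpha> c)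
    have "Poly_Mapping.update \<alpha> c p = p + mpoly_const c * Poly_Mapping.single \<alpha> 1"
      using update(1) by (simp add: update_eq_add_single mpoly_const_def mult_single)
    then show ?case
      using generate_ring.eng_add[OF update(3)
          generate_ring.eng_mult[OF const_mem monomial_in_generate_ring_const_var]]
      by simp
  qed
  then show ?thesis by auto
qed

lemma fg_algebra_mpoly:
  "fg_algebra type_ring (type_ring :: ('n::finite, 'b::comm_ring_1) mpoly ring) mpoly_const"
  unfolding fg_algebra_def
  by (intro exI[of _ "range mpoly_var"]) (simp add: generate_ring_mpoly_const_var)

lemma Quot_hom_affine_mpoly:
  assumes I: "ideal I (type_ring :: 'b::comm_ring_1 ring)"
    and hom: "\<pi> \<in> ring_hom (type_ring :: ('n, 'b) mpoly ring) (type_ring Quot I)"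
    and const: "\<And>r. \<pi> (mpoly_const r) = I +>\<^bsub>type_ring\<^esub> r"
    and var: "\<And>j. \<pi> (mpoly_var j) = I +>\<^bsub>type_ring\<^esub> c j"
    and "finite S"
  shows "\<pi> (mpoly_const a + (\<Sum>j\<in>S. mpoly_const (r j) * mpoly_var j))
    = I +>\<^bsub>type_ring\<^esub> (a + (\<Sum>j\<in>S. r j * c j))"
proof -
  have add: "\<pi> (p + q) = I +>\<^bsub>type_ring\<^esub> (x + y)"
    if "\<pi> p = I +>\<^bsub>type_ring\<^esub> x" "\<pi> q = I +>\<^bsub>type_ring\<^esub> y" for p q x y
    using ring_hom_add[OF hom, of p q] that type_ring_Quot_rcos_ops(1)[OF I] by simp
  have mult: "\<pi> (p * q) = I +>\<^bsub>type_ring\<^esub> (x * y)"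
    if "\<pi> p = I +>\<^bsub>type_ring\<^esub> x" "\<pi> q = I +>\<^bsub>type_ring\<^esub> y" for p q x y
    using ring_hom_mult[OF hom, of p q] that type_ring_Quot_rcos_ops(2)[OF I] by simp
  have "\<pi> (\<Sum>j\<in>S. mpoly_const (r j) * mpoly_var j) = I +>\<^bsub>type_ring\<^esub> (\<Sum>j\<in>S. r j * c j)"
    using \<open>finite S\<close>
  proof (induction S rule: finite_induct)
    case empty
    show ?case using const[of 0] by (simp add: mpoly_const_def)
  next
    case (insert j S)
    then show ?case using add[OF mult[OF const var] insert(3)] by simp
  qed
  then show ?thesis by (rule add[OF const])
qed

section \<open>The pullback as a quotient of a polynomial ring\<close>

lemma Quot_pair_image_subset_fiber_product:
  assumes I1: "ideal I1 (type_ring :: 'b::comm_ring_1 ring)" and I2: "ideal I2 (type_ring :: 'b ring)"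
    and J: "ideal J (type_ring :: 'b ring)" and sub1: "I1 \<subseteq> J" and sub2: "I2 \<subseteq> J"
    and hom1: "\<pi>1 \<in> ring_hom (type_ring :: ('n, 'b) mpoly ring) (type_ring Quot I1)"
    and hom2: "\<pi>2 \<in> ring_hom (type_ring :: ('n, 'b) mpoly ring) (type_ring Quot I2)"
    and "\<And>r. \<pi>1 (mpoly_const r) = I1 +>\<^bsub>type_ring\<^esub> r"
    and "\<And>r. \<pi>2 (mpoly_const r) = I2 +>\<^bsub>type_ring\<^esub> r"
    and "\<And>j. \<pi>1 (mpoly_var j) = I1 +>\<^bsub>type_ring\<^esub> c1 j"
    and "\<And>j. \<pi>2 (mpoly_var j) = I2 +>\<^bsub>type_ring\<^esub> c2 j"
    and "\<And>j. c1 j - c2 j \<in> J"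
  shows "(\<lambda>p. (\<pi>1 p, \<pi>2 p)) ` carrier type_ring \<subseteq>
    carrier (fiber_product (type_ring Quot I1) (type_ring Quot I2) (quot_proj type_ring J) (quot_proj type_ring J))"
proof -
  let ?A = "type_ring :: ('n, 'b) mpoly ring"
  let ?H = "range mpoly_const \<union> range mpoly_var :: ('n, 'b) mpoly set"
  have h1: "quot_proj type_ring J \<circ> \<pi>1 \<in> ring_hom ?A (type_ring Quot J)"
    by (rule ring_hom_trans[OF hom1 quot_proj_ring_hom[OF I1 J sub1]])
  have h2: "quot_proj type_ring J \<circ> \<pi>2 \<in> ring_hom ?A (type_ring Quot J)"
    by (rule ring_hom_trans[OF hom2 quot_proj_ring_hom[OF I2 J sub2]])
  have on_generators: "(quot_proj type_ring J \<circ> \<pi>1) x = (quot_proj type_ring J \<circ> \<pi>2) x"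
    if "x \<in> ?H" for x
    using that assms(8-12)
    by (elim UnE rangeE)
      (simp_all add: quot_proj_rcos[OF I1 J sub1] quot_proj_rcos[OF I2 J sub2] type_ring_rcos_eq_iff[OF J])
  have "(quot_proj type_ring J \<circ> \<pi>1) p = (quot_proj type_ring J \<circ> \<pi>2) p" for p
    by (rule ring_hom_eq_on_generate_ring[where H = ?H, OF ring_type_ring ideal.quotient_is_ring[OF J] h1 h2
          _ on_generators])
      (simp_all add: generate_ring_mpoly_const_var)
  then show ?thesis
    using ring_hom_closed[OF hom1] ring_hom_closed[OF hom2]
    by (auto simp: fiber_product_def RDirProd_carrier)
qed

lemma fiber_product_subset_Quot_pair_image:
  fixes k :: "'n::finite \<Rightarrow> 'b::comm_ring_1" and \<pi>1 \<pi>2 :: "('n, 'b) mpoly \<Rightarrow> 'b set"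
  assumes I1: "ideal I1 (type_ring :: 'b ring)" and I2: "ideal I2 (type_ring :: 'b ring)"
    and J: "ideal J (type_ring :: 'b ring)" and sub1: "I1 \<subseteq> J" and sub2: "I2 \<subseteq> J"
    and J_sub: "J \<subseteq> (I1 <+>\<^bsub>type_ring\<^esub> I2) <+>\<^bsub>type_ring\<^esub> genideal type_ring (range k)"
    and hom1: "\<pi>1 \<in> ring_hom type_ring (type_ring Quot I1)"
    and alg1: "\<And>r. \<pi>1 (mpoly_const r) = I1 +>\<^bsub>type_ring\<^esub> r"
    and var1: "\<And>j. \<pi>1 (mpoly_var j) = I1 +>\<^bsub>type_ring\<^esub> k j"
    and hom2: "\<pi>2 \<in> ring_hom type_ring (type_ring Quot I2)"
    and alg2: "\<And>r. \<pi>2 (mpoly_const r) = I2 +>\<^bsub>type_ring\<^esub> r"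
    and var2: "\<And>j. \<pi>2 (mpoly_var j) = I2 +>\<^bsub>type_ring\<^esub> 0"
  shows "carrier (fiber_product (type_ring Quot I1) (type_ring Quot I2) (quot_proj type_ring J) (quot_proj type_ring J))
    \<subseteq> (\<lambda>p. (\<pi>1 p, \<pi>2 p)) ` carrier type_ring"
proof
  fix z assume "z \<in> carrier (fiber_product (type_ring Quot I1) (type_ring Quot I2)
    (quot_proj type_ring J) (quot_proj type_ring J))"
  then obtain a b where z: "z = (I1 +>\<^bsub>type_ring\<^esub> a, I2 +>\<^bsub>type_ring\<^esub> b)"
    and "quot_proj type_ring J (I1 +>\<^bsub>type_ring\<^esub> a) = quot_proj type_ring J (I2 +>\<^bsub>type_ring\<^esub> b)"
    by (auto simp: fiber_product_def RDirProd_carrier type_ring_Quot_carrier)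
  then have "a - b \<in> J"
    using type_ring_rcos_eq_iff[OF J]
    by (simp add: quot_proj_rcos[OF I1 J sub1] quot_proj_rcos[OF I2 J sub2])
  then obtain u i3 where u: "u \<in> I1 <+>\<^bsub>type_ring\<^esub> I2" and i3: "i3 \<in> genideal type_ring (range k)"
    and "a - b = u + i3"
    using J_sub type_ring_set_add_iff[of "a - b" "I1 <+>\<^bsub>type_ring\<^esub> I2"] by blast
  moreover obtain i1 i2 where i1: "i1 \<in> I1" and i2: "i2 \<in> I2" and "u = i1 + i2"
    using u type_ring_set_add_iff by blast
  moreover obtain r where "i3 = (\<Sum>j\<in>UNIV. r j * k j)"
    using genideal_type_ring_finite_range[OF i3] .
  ultimately have "a - (b + i2 + (\<Sum>j\<in>UNIV. r j * k j)) = i1"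
    by (simp add: algebra_simps)
  define p where "p = mpoly_const (b + i2) + (\<Sum>j\<in>UNIV. mpoly_const (r j) * mpoly_var j)"
  have "\<pi>1 p = I1 +>\<^bsub>type_ring\<^esub> (b + i2 + (\<Sum>j\<in>UNIV. r j * k j))"
    unfolding p_def by (rule Quot_hom_affine_mpoly[OF I1 hom1 alg1 var1]) simp
  also have "\<dots> = I1 +>\<^bsub>type_ring\<^esub> a"
    using i1 \<open>a - (b + i2 + (\<Sum>j\<in>UNIV. r j * k j)) = i1\<close> type_ring_rcos_eq_iff[OF I1] by metis
  finally have "\<pi>1 p = I1 +>\<^bsub>type_ring\<^esub> a" .
  have "\<pi>2 p = I2 +>\<^bsub>type_ring\<^esub> (b + i2 + (\<Sum>j\<in>UNIV. r j * 0))"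
    unfolding p_def by (rule Quot_hom_affine_mpoly[where c = "\<lambda>_. 0", OF I2 hom2 alg2 var2]) simp
  also have "\<dots> = I2 +>\<^bsub>type_ring\<^esub> b"
    using i2 type_ring_rcos_eq_iff[OF I2] by simp
  finally have "\<pi>2 p = I2 +>\<^bsub>type_ring\<^esub> b" .
  with \<open>\<pi>1 p = I1 +>\<^bsub>type_ring\<^esub> a\<close> show "z \<in> (\<lambda>p. (\<pi>1 p, \<pi>2 p)) ` carrier type_ring"
    using z by auto
qed

theorem lemma2p6:
  fixes I1 I2 I3 :: "'a::comm_ring_1 set"
    and k :: "'n::finite \<Rightarrow> 'a"
    and \<pi>1 \<pi>2 :: "('n, 'a) mpoly \<Rightarrow> 'a set"
    and J :: "'a set"
  assumes noeth: "noetherian_ring (type_ring :: 'a ring)"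
    and I1: "ideal I1 (type_ring :: 'a ring)"
    and I2: "ideal I2 (type_ring :: 'a ring)"
    and I3: "ideal I3 (type_ring :: 'a ring)"
    and J: "J = (I1 <+>\<^bsub>(type_ring :: 'a ring)\<^esub> I2) <+>\<^bsub>(type_ring :: 'a ring)\<^esub> I3"
    and gen: "I3 = genideal (type_ring :: 'a ring) (range k)"
    and hom1: "\<pi>1 \<in> ring_hom (type_ring :: ('n, 'a) mpoly ring) ((type_ring :: 'a ring) Quot I1)"
    and alg1: "\<And>r. \<pi>1 (mpoly_const r) = I1 +>\<^bsub>(type_ring :: 'a ring)\<^esub> r"
    and var1: "\<And>j. \<pi>1 (mpoly_var j) = I1 +>\<^bsub>(type_ring :: 'a ring)\<^esub> k j"
    and hom2: "\<pi>2 \<in> ring_hom (type_ring :: ('n, 'a) mpoly ring) ((type_ring :: 'a ring) Quot I2)"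
    and alg2: "\<And>r. \<pi>2 (mpoly_const r) = I2 +>\<^bsub>(type_ring :: 'a ring)\<^esub> r"
    and var2: "\<And>j. \<pi>2 (mpoly_var j) = I2 +>\<^bsub>(type_ring :: 'a ring)\<^esub> 0"
  shows "(fiber_product ((type_ring :: 'a ring) Quot I1) ((type_ring :: 'a ring) Quot I2)
           (quot_proj (type_ring :: 'a ring) J) (quot_proj (type_ring :: 'a ring) J)
         \<simeq> ((type_ring :: ('n, 'a) mpoly ring) Quot
              (a_kernel (type_ring :: ('n, 'a) mpoly ring) ((type_ring :: 'a ring) Quot I1) \<pi>1
               \<inter> a_kernel (type_ring :: ('n, 'a) mpoly ring) ((type_ring :: 'a ring) Quot I2) \<pi>2)))
    \<and> fg_algebra (type_ring :: 'a ring)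
           (fiber_product ((type_ring :: 'a ring) Quot I1) ((type_ring :: 'a ring) Quot I2)
              (quot_proj (type_ring :: 'a ring) J) (quot_proj (type_ring :: 'a ring) J))
           (\<lambda>r. (I1 +>\<^bsub>(type_ring :: 'a ring)\<^esub> r, I2 +>\<^bsub>(type_ring :: 'a ring)\<^esub> r))"
proof -
  interpret cring "type_ring :: 'a ring" by (rule cring_type_ring)
  have I12: "ideal (I1 <+>\<^bsub>type_ring\<^esub> I2) type_ring"
    by (rule add_ideals[OF I1 I2])
  have J_ideal: "ideal J type_ring"
    unfolding J by (rule add_ideals[OF I12 I3])
  have sub1: "I1 \<subseteq> J" and sub2: "I2 \<subseteq> J" and sub3: "I3 \<subseteq> J"
    using ideals_subset_set_add[OF I1 I2] ideals_subset_set_add[OF I12 I3] unfolding J by blast+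
  have k_in_J: "k j - 0 \<in> J" for j
    using genideal_self[of "range k"] sub3 gen by auto
  have onto: "(\<lambda>p. (\<pi>1 p, \<pi>2 p)) ` carrier type_ring = carrier (fiber_product (type_ring Quot I1)
      (type_ring Quot I2) (quot_proj type_ring J) (quot_proj type_ring J))"
    using Quot_pair_image_subset_fiber_product[OF I1 I2 J_ideal sub1 sub2 hom1 hom2 alg1 alg2 var1 var2 k_in_J]
      fiber_product_subset_Quot_pair_image[OF I1 I2 J_ideal sub1 sub2 _ hom1 alg1 var1 hom2 alg2 var2]
    unfolding J gen by blast
  note rings = ring_type_ring ideal.quotient_is_ring[OF I1] ideal.quotient_is_ring[OF I2]
  have "(\<lambda>p. (\<pi>1 p, \<pi>2 p)) \<circ> mpoly_const = (\<lambda>r. (I1 +>\<^bsub>type_ring\<^esub> r, I2 +>\<^bsub>type_ring\<^esub> r))"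
    by (simp add: fun_eq_iff alg1 alg2)
  then show ?thesis
    using fiber_product_iso_Quot_kernels[OF rings hom1 hom2 onto]
      fg_algebra_surjective_image[OF ring_type_ring fiber_product_pair_ring_hom(1)[OF rings hom1 hom2 onto]
        fg_algebra_mpoly fiber_product_pair_ring_hom(2)[OF rings hom1 hom2 onto] onto]
    by simp
qed

end
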